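(* Let $\pi_0\in(0,1)$, $\sigma\in(0,0.25]$, $w>0$, and let $\psi(\pi)=w$ if $\pi\ge\pi_0$ and $\psi(\pi)=0$ otherwise. For $(p_0,p_1)\in[0,1]^2$ let $$\pi_S=\frac{(1-p_1)\pi_0}{(1-p_1)\pi_0+(1-p_0)(1-\pi_0)},\qquad \pi_C=\frac{p_1\pi_0}{p_1\pi_0+p_0(1-\pi_0)},$$ $$\Phi_\theta(C,\sigma,\pi_0,p_0,p_1)=0.5+2\sigma\theta+(0.5+2\sigma\theta)\psi\!\left(\tfrac{(1+4\sigma)\pi_C}{1+4\sigma\pi_C}\right)+(0.5-2\sigma\theta)\psi\!\left(\tfrac{(1-4\sigma)\pi_C}{1-4\sigma\pi_C}\right)$$ and $\Phi_\theta(S,\sigma,\pi_0,p_0,p_1)=0.5+\psi(\pi_S)$, for $\theta\in\{0,1\}$. Then $$\Phi_\theta(C,\sigma,\pi_0,p_0,p_1)=\begin{cases}0.5+2\sigma\theta & \text{if } p_1(1+4\sigma)<p_0,\\ 0.5+2\sigma\theta+(0.5+2\sigma\theta)w & \text{if } p_1(1-4\sigma)<p_0\le p_1(1+4\sigma),\\ 0.5+2\sigma\theta+w & \text{if } p_0\le p_1(1-4\sigma),\end{cases}$$ and $\Phi_\theta(S,\sigma,\pi_0,p_0,p_1)=0.5+w$ if $p_0\ge p_1$ and $0.5$ otherwise.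
   Context: Interpretation: an expert of known type $\theta$ (competent iff $\theta=1$, prior $\pi_0$) chooses the complex rule with probability $p_\theta$; $\pi_C,\pi_S$ are the advisee's beliefs after observing the complex or simple rule; the expert earns wage $w$ iff the advisee's posterior that he is competent is at least $\pi_0$; $\Phi_\theta(r,\cdot)$ is the type-$\theta$ expert's expected payoff from choosing rule $r$ with certainty. *)

theory Defs
  imports Complex_Main
begin

definition psi :: "real \<Rightarrow> real \<Rightarrow> real \<Rightarrow> real" where
  "psi w pi0 p = (if p \<ge> pi0 then w else 0)"

definition piS :: "real \<Rightarrow> real \<Rightarrow> real \<Rightarrow> real" where
  "piS pi0 p0 p1 = ((1 - p1) * pi0) / ((1 - p1) * pi0 + (1 - p0) * (1 - pi0))"

definition piC :: "real \<Rightarrow> real \<Rightarrow> real \<Rightarrow> real" where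
  "piC pi0 p0 p1 = (p1 * pi0) / (p1 * pi0 + p0 * (1 - pi0))"

definition PhiC :: "real \<Rightarrow> real \<Rightarrow> real \<Rightarrow> real \<Rightarrow> real \<Rightarrow> real \<Rightarrow> real" where
  "PhiC w \<theta> \<sigma> pi0 p0 p1 =
     (let pc = piC pi0 p0 p1 in
      0.5 + 2 * \<sigma> * \<theta>
      + (0.5 + 2 * \<sigma> * \<theta>) * psi w pi0 ((1 + 4 * \<sigma>) * pc / (1 + 4 * \<sigma> * pc))
      + (0.5 - 2 * \<sigma> * \<theta>) * psi w pi0 ((1 - 4 * \<sigma>) * pc / (1 - 4 * \<sigma> * pc)))"

definition PhiS :: "real \<Rightarrow> real \<Rightarrow> real \<Rightarrow> real \<Rightarrow> real \<Rightarrow> real \<Rightarrow> real" where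
  "PhiS w \<theta> \<sigma> pi0 p0 p1 = 0.5 + psi w pi0 (piS pi0 p0 p1)"

end

theory Submission
  imports Defs
begin

text \<open>Both beliefs are Bayesian posteriors, and so are the beliefs appearing in the complex
  payoff: multiplying the competent type's likelihood by c turns a posterior p into
  c p / (1 + (c - 1) p). A posterior is at least the prior exactly when the competent type's
  likelihood is at least the incompetent type's, which gives every threshold in the statement.\<close>

definition posterior :: "real \<Rightarrow> real \<Rightarrow> real \<Rightarrow> real" where
  "posterior \<pi> a b = a * \<pi> / (a * \<pi> + b * (1 - \<pi>))"

lemma piC_eq_posterior: "piC pi0 p0 p1 = posterior pi0 p1 p0"
  by (simp add: piC_def posterior_def mult.commute)

lemma piS_eq_posterior: "piS pi0 p0 p1 = posterior pi0 (1 - p1) (1 - p0)"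
  by (simp add: piS_def posterior_def mult.commute)

lemma posterior_denominator_nonneg:
  fixes \<pi> a b :: real
  assumes "0 \<le> \<pi>" "\<pi> \<le> 1" "0 \<le> a" "0 \<le> b"
  shows "0 \<le> a * \<pi> + b * (1 - \<pi>)"
  using assms by simp

lemma posterior_denominator_pos:
  fixes \<pi> a b :: real
  assumes "0 \<le> \<pi>" "\<pi> \<le> 1" "0 \<le> a" "0 \<le> b" "a * \<pi> + b * (1 - \<pi>) \<noteq> 0"
  shows "0 < a * \<pi> + b * (1 - \<pi>)"
  using posterior_denominator_nonneg[OF assms(1-4)] assms(5) by linarith

lemma posterior_nonneg:
  fixes \<pi> a b :: real
  assumes "0 \<le> \<pi>" "\<pi> \<le> 1" "0 \<le> a" "0 \<le> b"
  shows "0 \<le> posterior \<pi> a b"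
  using assms by (simp add: posterior_def)

lemma posterior_le_one:
  fixes \<pi> a b :: real
  assumes "0 \<le> \<pi>" "\<pi> \<le> 1" "0 \<le> a" "0 \<le> b"
  shows "posterior \<pi> a b \<le> 1"
proof (cases "a * \<pi> + b * (1 - \<pi>) = 0")
  case False
  with posterior_denominator_pos assms have "0 < a * \<pi> + b * (1 - \<pi>)"
    by blast
  then show ?thesis
    using assms by (simp add: posterior_def divide_le_eq_1_pos)
qed (simp add: posterior_def)

lemma posterior_ge_prior_iff:
  fixes \<pi> a b :: real
  assumes "0 < \<pi>" "\<pi> < 1" "0 < a * \<pi> + b * (1 - \<pi>)"
  shows "\<pi> \<le> posterior \<pi> a b \<longleftrightarrow> b \<le> a"
proof -
  have "\<pi> \<le> posterior \<pi> a b \<longleftrightarrow> \<pi> * (a * \<pi> + b * (1 - \<pi>)) \<le> a * \<pi>"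
    using assms(3) by (simp add: posterior_def pos_le_divide_eq)
  also have "\<dots> \<longleftrightarrow> \<pi> * ((1 - \<pi>) * b) \<le> \<pi> * ((1 - \<pi>) * a)"
    by (simp add: algebra_simps)
  also have "\<dots> \<longleftrightarrow> b \<le> a"
    using assms(1,2) by simp
  finally show ?thesis .
qed

lemma posterior_scale_denominator:
  fixes \<pi> a b c :: real
  assumes "a * \<pi> + b * (1 - \<pi>) \<noteq> 0"
  shows "1 + (c - 1) * posterior \<pi> a b = ((c * a) * \<pi> + b * (1 - \<pi>)) / (a * \<pi> + b * (1 - \<pi>))"
  using assms by (simp add: posterior_def field_simps)

lemma posterior_scale:
  fixes \<pi> a b c :: real
  assumes "a * \<pi> + b * (1 - \<pi>) \<noteq> 0"
  shows "c * posterior \<pi> a b / (1 + (c - 1) * posterior \<pi> a b) = posterior \<pi> (c * a) b"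
  using assms by (simp add: posterior_scale_denominator) (simp add: posterior_def)

lemma psi_posterior:
  fixes \<pi> a b w :: real
  assumes "0 < \<pi>" "\<pi> < 1" "0 < a * \<pi> + b * (1 - \<pi>)"
  shows "psi w \<pi> (posterior \<pi> a b) = (if b \<le> a then w else 0)"
  using posterior_ge_prior_iff[OF assms] by (simp add: psi_def)

lemma psi_posterior_scale:
  fixes \<pi> a b c w :: real
  assumes "0 < \<pi>" "\<pi> < 1" "0 < a * \<pi> + b * (1 - \<pi>)"
    and "0 < 1 + (c - 1) * posterior \<pi> a b"
  shows "psi w \<pi> (c * posterior \<pi> a b / (1 + (c - 1) * posterior \<pi> a b)) =
    (if b \<le> a * c then w else 0)"
proof -
  have "0 < (c * a) * \<pi> + b * (1 - \<pi>)"
    using assms(3,4) by (simp add: posterior_scale_denominator zero_less_divide_iff)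
  then show ?thesis
    using assms(3) by (simp add: posterior_scale psi_posterior[OF assms(1,2)] mult.commute)
qed

lemma PhiC_eq:
  fixes pi0 \<sigma> w p0 p1 \<theta> :: real
  assumes "0 < pi0" "pi0 < 1" "0 < \<sigma>" "\<sigma> \<le> 1 / 4" "0 \<le> p0" "0 \<le> p1"
    and "p1 * pi0 + p0 * (1 - pi0) \<noteq> 0" "1 - 4 * \<sigma> * piC pi0 p0 p1 \<noteq> 0"
  shows "PhiC w \<theta> \<sigma> pi0 p0 p1 =
    (if p1 * (1 + 4 * \<sigma>) < p0 then 0.5 + 2 * \<sigma> * \<theta>
     else if p1 * (1 - 4 * \<sigma>) < p0 then 0.5 + 2 * \<sigma> * \<theta> + (0.5 + 2 * \<sigma> * \<theta>) * w
     else 0.5 + 2 * \<sigma> * \<theta> + w)"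
proof -
  define pc where "pc = posterior pi0 p1 p0"
  have denominator: "0 < p1 * pi0 + p0 * (1 - pi0)"
    using assms by (intro posterior_denominator_pos) auto
  have "0 \<le> pc" "pc \<le> 1"
    unfolding pc_def using assms by (simp_all add: posterior_nonneg posterior_le_one)
  then have "4 * \<sigma> * pc \<le> 1"
    using assms(3,4) mult_mono[of "4 * \<sigma>" 1 pc 1] by simp
  then have "0 < 1 + (1 - 4 * \<sigma> - 1) * pc" "0 < 1 + (1 + 4 * \<sigma> - 1) * pc"
    using assms(3,8) \<open>0 \<le> pc\<close> by (auto simp: pc_def piC_eq_posterior add_pos_nonneg)
  note psi_scaled = this[unfolded pc_def, THEN psi_posterior_scale[OF assms(1,2) denominator]]
  have "p1 * (1 - 4 * \<sigma>) \<le> p1 * (1 + 4 * \<sigma>)"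
    using assms by (intro mult_left_mono) auto
  with psi_scaled show ?thesis
    by (auto simp: PhiC_def piC_eq_posterior algebra_simps)
qed

lemma PhiS_eq:
  fixes pi0 \<sigma> w p0 p1 \<theta> :: real
  assumes "0 < pi0" "pi0 < 1" "p0 \<le> 1" "p1 \<le> 1"
    and "(1 - p1) * pi0 + (1 - p0) * (1 - pi0) \<noteq> 0"
  shows "PhiS w \<theta> \<sigma> pi0 p0 p1 = (if p0 \<ge> p1 then 0.5 + w else 0.5)"
proof -
  have "0 < (1 - p1) * pi0 + (1 - p0) * (1 - pi0)"
    using assms by (intro posterior_denominator_pos) auto
  then show ?thesis
    using assms(1,2) by (simp add: PhiS_def piS_eq_posterior psi_posterior)
qed

theorem lemma5:
  fixes pi0 \<sigma> w p0 p1 \<theta> :: real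
  assumes "0 < pi0" "pi0 < 1"
    and "0 < \<sigma>" "\<sigma> \<le> 0.25"
    and "w > 0"
    and "0 \<le> p0" "p0 \<le> 1" "0 \<le> p1" "p1 \<le> 1"
    and "\<theta> \<in> {0, 1}"
  shows "(p1 * pi0 + p0 * (1 - pi0) \<noteq> 0 \<and> 1 - 4 * \<sigma> * piC pi0 p0 p1 \<noteq> 0 \<longrightarrow>
            PhiC w \<theta> \<sigma> pi0 p0 p1 =
              (if p1 * (1 + 4 * \<sigma>) < p0 then 0.5 + 2 * \<sigma> * \<theta>
               else if p1 * (1 - 4 * \<sigma>) < p0 then 0.5 + 2 * \<sigma> * \<theta> + (0.5 + 2 * \<sigma> * \<theta>) * w
               else 0.5 + 2 * \<sigma> * \<theta> + w))
       \<and> ((1 - p1) * pi0 + (1 - p0) * (1 - pi0) \<noteq> 0 \<longrightarrow>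
            PhiS w \<theta> \<sigma> pi0 p0 p1 = (if p0 \<ge> p1 then 0.5 + w else 0.5))"
  using assms PhiC_eq[of pi0 \<sigma> p0 p1 w \<theta>] PhiS_eq[of pi0 p0 p1 w \<theta> \<sigma>] by simp

end
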